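(* Let $q\ge2$, $n\ge1$, $P=2\lceil\log_q n+\log_q\log_q n\rceil+1$, and let $p$ be the smallest prime with $p\ge\max\{P,q\}$. Let $a_0\in[0,3(q-1)]$ and $a_1,a_2\in[0,p-1]$, and let $\mathcal{C}_{q,4,P}=\{\boldsymbol{z}\in\Sigma_q^n:\mathrm{VT}^{(0)}(\boldsymbol{z})\equiv a_0\pmod{3(q-1)+1},\ \mathrm{VT}^{(1)}(\boldsymbol{z})\equiv a_1\pmod p,\ \mathrm{VT}^{(2)}(\boldsymbol{z})\equiv a_2\pmod p\}$. Then the code $$\mathcal{C}=\{\boldsymbol{x}\in\mathcal{ALL}(n,\tfrac{P-1}{2}):\ \mathbf{1}(\boldsymbol{x})\in\mathcal{C}_{q,4,P}\}$$ is a $2$-read $(n,4)_q$-code. Moreover, there exists a choice of $a_0,a_1,a_2$ such that $r(\mathcal{C})\le2\log_q\log_q n+\log_q(3(q-1)+1)+2\log_q4+o(1)$ as $n\to\infty$.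
   Context: $\Sigma_q=\{0,\dots,q-1\}$. For $\boldsymbol{x}\in\Sigma_q^n$, $x[i]$ is its $i$-th entry, with $x[i]=0$ for $i\notin[1,n]$. $\mathrm{VT}^{(k)}(\boldsymbol{z})=\sum_{i=1}^n i^kz[i]$. The indicator sequence $\mathbf{1}(\boldsymbol{x})\in\Sigma_q^n$ is given by $\mathbf{1}(\boldsymbol{x})[i]=x[i]+x[i-1]\bmod q$ for $i\in[1,n]$. A sequence is alternating if it has the form $abab\cdots$ for distinct symbols $a,b$; $\mathcal{ALL}(n,L)$ is the set of $\boldsymbol{x}\in\Sigma_q^n$ all of whose alternating substrings (contiguous blocks) have length at most $L$. $\mathcal{R}(\boldsymbol{x})$ is the length-$(n+1)$ vector whose $i$-th entry is the multiset $\{\{x[i-1],x[i]\}\}$; $\mathcal{C}$ is a $2$-read $(n,d)_q$-code if $d_H(\mathcal{R}(\boldsymbol{x}),\mathcal{R}(\boldsymbol{y}))\ge d$ for distinct $\boldsymbol{x},\boldsymbol{y}\in\mathcal{C}$ ($d_H$ = Hamming distance). Redundancy: $r(\mathcal{C})=n-\log_q|\mathcal{C}|$. *)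

theory Defs
  imports Complex_Main "HOL-Library.Multiset" "HOL-Computational_Algebra.Primes"
begin

text \<open>Sequences in Sigma_q^n are functions nat => nat, indexed 1..n, zero outside [1,n].\<close>
definition seqs :: "nat \<Rightarrow> nat \<Rightarrow> (nat \<Rightarrow> nat) set" where
  "seqs q n = {x. (\<forall>i. x i < q) \<and> (\<forall>i. (i < 1 \<or> n < i) \<longrightarrow> x i = 0)}"

definition VT :: "nat \<Rightarrow> nat \<Rightarrow> (nat \<Rightarrow> nat) \<Rightarrow> nat" where
  "VT k n z = (\<Sum>i=1..n. i ^ k * z i)"

definition indic :: "nat \<Rightarrow> nat \<Rightarrow> (nat \<Rightarrow> nat) \<Rightarrow> (nat \<Rightarrow> nat)" where
  "indic q n x = (\<lambda>i. if 1 \<le> i \<and> i \<le> n then (x i + x (i - 1)) mod q else 0)"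

definition alternating_block :: "(nat \<Rightarrow> nat) \<Rightarrow> nat \<Rightarrow> nat \<Rightarrow> bool" where
  "alternating_block x i m =
     (\<exists>a b. a \<noteq> b \<and> (\<forall>t<m. x (i + t) = (if even t then a else b)))"

definition ALL_set :: "nat \<Rightarrow> nat \<Rightarrow> nat \<Rightarrow> (nat \<Rightarrow> nat) set" where
  "ALL_set q n L = {x \<in> seqs q n. \<forall>i m. 1 \<le> i \<and> 1 \<le> m \<and> i + m - 1 \<le> n
        \<and> alternating_block x i m \<longrightarrow> m \<le> L}"

definition read2 :: "(nat \<Rightarrow> nat) \<Rightarrow> nat \<Rightarrow> nat multiset" where
  "read2 x i = {# x (i - 1), x i #}"

definition read_dist :: "nat \<Rightarrow> (nat \<Rightarrow> nat) \<Rightarrow> (nat \<Rightarrow> nat) \<Rightarrow> nat" where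
  "read_dist n x y = card {i \<in> {1..n+1}. read2 x i \<noteq> read2 y i}"

definition is_2read_code :: "nat \<Rightarrow> nat \<Rightarrow> nat \<Rightarrow> (nat \<Rightarrow> nat) set \<Rightarrow> bool" where
  "is_2read_code q n d C = (C \<subseteq> seqs q n \<and>
     (\<forall>x\<in>C. \<forall>y\<in>C. x \<noteq> y \<longrightarrow> d \<le> read_dist n x y))"

definition redundancy :: "nat \<Rightarrow> nat \<Rightarrow> (nat \<Rightarrow> nat) set \<Rightarrow> real" where
  "redundancy q n C = real n - log (real q) (real (card C))"

definition Pval :: "nat \<Rightarrow> nat \<Rightarrow> int" where
  "Pval q n = 2 * \<lceil>log (real q) (real n) + log (real q) (log (real q) (real n))\<rceil> + 1"

definition pval :: "nat \<Rightarrow> nat \<Rightarrow> nat" where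
  "pval q n = (LEAST p. prime p \<and> q \<le> p \<and> Pval q n \<le> int p)"

definition Cq4P :: "nat \<Rightarrow> nat \<Rightarrow> nat \<Rightarrow> nat \<Rightarrow> nat \<Rightarrow> (nat \<Rightarrow> nat) set" where
  "Cq4P q n a0 a1 a2 = {z \<in> seqs q n.
      VT 0 n z mod (3 * (q - 1) + 1) = a0 \<and>
      VT 1 n z mod pval q n = a1 \<and>
      VT 2 n z mod pval q n = a2}"

definition code :: "nat \<Rightarrow> nat \<Rightarrow> nat \<Rightarrow> nat \<Rightarrow> nat \<Rightarrow> (nat \<Rightarrow> nat) set" where
  "code q n a0 a1 a2 =
     {x \<in> ALL_set q n (nat ((Pval q n - 1) div 2)). indic q n x \<in> Cq4P q n a0 a1 a2}"

end

theory Submission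
  imports Defs "HOL-Library.FuncSet" "HOL-Real_Asymp.Real_Asymp"
begin

text \<open>
  Let \<open>x \<noteq> y\<close> be codewords whose 2-read vectors differ in at most three positions, and let
  \<open>[i, j]\<close> be the smallest window containing every \<open>t\<close> with \<open>x t \<noteq> y t\<close>. The reads differ at
  \<open>i\<close> and at \<open>j + 1\<close>, so at most one read difference lies strictly inside. Where the reads
  agree, a mismatch can only persist by swapping the two symbols, so \<open>x\<close> alternates on each of
  the at most two mismatch runs, and the ALL constraint bounds \<open>j + 1 - i\<close> by \<open>2 L < p\<close>,
  where \<open>L = (P - 1) / 2\<close>. The indicator sequences agree wherever the reads agree, so their
  difference \<open>f\<close> is supported on at most three positions at mutual distance below \<open>p\<close>. The VT
  constraints make \<open>\<Sum> f = 0\<close> (its modulus exceeds \<open>3 (q - 1)\<close>) and the first and second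
  moments of \<open>f\<close> vanish modulo the prime \<open>p\<close>; weighting by \<open>(t - b) (t - c)\<close> isolates each
  value, so \<open>f = 0\<close>, and \<open>x = y\<close> because the indicator map is injective.

  For the redundancy, a union bound over the position and the two symbols of a too long
  alternating block shows that all but a fraction \<open>q / log\<^sub>q n\<close> of \<open>\<Sigma>\<^sub>q\<^sup>n\<close> satisfies the ALL
  constraint, and by pigeonhole some \<open>(a0, a1, a2)\<close> keeps a \<open>1 / ((3 (q - 1) + 1) p\<^sup>2)\<close> share of
  it. Bertrand's postulate, in Erdos's form via the central binomial coefficient, gives
  \<open>p \<le> 4 (log\<^sub>q n + log\<^sub>q log\<^sub>q n + 1)\<close>.
\<close>

section \<open>Minimum read distance\<close>

lemma seqs_less: "x \<in> seqs q n \<Longrightarrow> x t < q"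
  by (simp add: seqs_def)

lemma seqs_eq_0: "x \<in> seqs q n \<Longrightarrow> t \<notin> {1..n} \<Longrightarrow> x t = 0"
  by (auto simp: seqs_def not_le)

lemma seqs_differences_subset:
  assumes x: "x \<in> seqs q n" and y: "y \<in> seqs q n"
  shows "{t. x t \<noteq> y t} \<subseteq> {1..n}"
proof
  fix t assume t: "t \<in> {t. x t \<noteq> y t}"
  show "t \<in> {1..n}"
  proof (rule ccontr)
    assume "t \<notin> {1..n}"
    with t show False
      using seqs_eq_0[OF x] seqs_eq_0[OF y] by simp
  qed
qed

lemma pval_prime: "prime (pval q n)"
  and pval_ge: "q \<le> pval q n" "Pval q n \<le> int (pval q n)"
proof -
  obtain p where "prime p" "max q (nat (Pval q n)) < p"
    using bigger_prime by blast
  then have "prime p \<and> q \<le> p \<and> Pval q n \<le> int p"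
    by auto
  then have "prime (pval q n) \<and> q \<le> pval q n \<and> Pval q n \<le> int (pval q n)"
    unfolding pval_def by (rule LeastI)
  then show "prime (pval q n)" "q \<le> pval q n" "Pval q n \<le> int (pval q n)"
    by blast+
qed

lemma int_dvd_abs_less_eq_0:
  fixes x m :: int
  assumes "m dvd x" and "\<bar>x\<bar> < m"
  shows "x = 0"
proof (rule ccontr)
  assume "x \<noteq> 0"
  then have "\<bar>m\<bar> \<le> \<bar>x\<bar>"
    by (rule dvd_imp_le_int[OF _ assms(1)])
  with assms(2) show False
    by simp
qed

lemma int_dvd_diff_of_mod_eq:
  fixes a b m :: nat
  assumes "a mod m = b mod m"
  shows "int m dvd int a - int b"
  using assms by (metis of_nat_mod mod_eq_dvd_iff)

lemma mod_add_right_cancel_less: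
  fixes a b c q :: nat
  assumes "a < q" "b < q" and "(a + c) mod q = (b + c) mod q"
  shows "a = b"
proof -
  have "int q dvd int (a + c) - int (b + c)"
    using assms(3) by (rule int_dvd_diff_of_mod_eq)
  then have "int q dvd int a - int b"
    by simp
  moreover have "\<bar>int a - int b\<bar> < int q"
    using assms(1,2) unfolding abs_less_iff by linarith
  ultimately show ?thesis
    using int_dvd_abs_less_eq_0 by fastforce
qed

lemma subset_doubleton_if_card_le_2:
  assumes "finite A" "card A \<le> 2" "A \<noteq> {}"
  obtains b c where "b \<in> A" "c \<in> A" "A \<subseteq> {b, c}"
proof -
  obtain b where b: "b \<in> A"
    using assms(3) by blast
  have "card (A - {b}) \<le> 1"
    using card_Diff_singleton[OF b] assms(2) by linarith
  then have "\<forall>c\<in>A - {b}. \<forall>c'\<in>A - {b}. c = c'"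
    using assms(1) card_le_Suc0_iff_eq[of "A - {b}"] by simp
  then show ?thesis
    using that b by blast
qed

lemma prime_dvd_value_if_moments_vanish:
  fixes f :: "nat \<Rightarrow> int" and p :: nat
  assumes p: "prime p" and S: "S \<subseteq> {a, b, c}" "a \<in> S" "b \<noteq> a" "c \<noteq> a"
    and ab: "\<not> int p dvd int a - int b" and ac: "\<not> int p dvd int a - int c"
    and m0: "(\<Sum>t\<in>S. f t) = 0"
    and m1: "int p dvd (\<Sum>t\<in>S. int t * f t)"
    and m2: "int p dvd (\<Sum>t\<in>S. (int t)\<^sup>2 * f t)"
  shows "int p dvd f a"
proof -
  have fin: "finite S" using S(1) finite_subset by blast
  \<comment> \<open>\<open>(t - b) (t - c)\<close> is a combination of \<open>1\<close>, \<open>t\<close>, \<open>t\<^sup>2\<close> that vanishes on \<open>S - {a}\<close>.\<close>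
  have "(\<Sum>t\<in>S. f t * ((int t - int b) * (int t - int c)))
      = f a * ((int a - int b) * (int a - int c))"
    using S fin by (subst sum.remove[of _ a]) (auto intro!: sum.neutral)
  moreover have "(\<Sum>t\<in>S. f t * ((int t - int b) * (int t - int c)))
      = (\<Sum>t\<in>S. (int t)\<^sup>2 * f t) - (int b + int c) * (\<Sum>t\<in>S. int t * f t)
        + int b * int c * (\<Sum>t\<in>S. f t)"
    by (simp add: sum_distrib_left sum_subtractf[symmetric] sum.distrib[symmetric]
        algebra_simps power2_eq_square)
  ultimately have "f a * ((int a - int b) * (int a - int c))
      = (\<Sum>t\<in>S. (int t)\<^sup>2 * f t) - (int b + int c) * (\<Sum>t\<in>S. int t * f t)"
    using m0 by simp
  moreover have "int p dvd (\<Sum>t\<in>S. (int t)\<^sup>2 * f t) - (int b + int c) * (\<Sum>t\<in>S. int t * f t)"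
    using m1 m2 by (intro dvd_diff dvd_mult)
  ultimately have "int p dvd f a * ((int a - int b) * (int a - int c))"
    by simp
  then show ?thesis
    using p ab ac by (simp add: prime_dvd_mult_iff)
qed

lemma moments_vanish_imp_zero:
  fixes f :: "nat \<Rightarrow> int" and p :: nat
  assumes p: "prime p" and S: "S \<subseteq> {i..i + d}" "d < p" "card S \<le> 3"
    and f: "\<And>t. t \<in> S \<Longrightarrow> \<bar>f t\<bar> < int p"
    and m0: "(\<Sum>t\<in>S. f t) = 0"
    and m1: "int p dvd (\<Sum>t\<in>S. int t * f t)"
    and m2: "int p dvd (\<Sum>t\<in>S. (int t)\<^sup>2 * f t)"
    and a: "a \<in> S"
  shows "f a = 0"
proof (cases "S - {a} = {}")
  case True
  then have "S = {a}"
    using a by blast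
  then show ?thesis
    using m0 by simp
next
  case False
  have fin: "finite S" using S(1) finite_subset by blast
  moreover have "card (S - {a}) \<le> 2"
    using S(3) a fin by simp
  ultimately obtain b c where bc: "b \<in> S - {a}" "c \<in> S - {a}" "S - {a} \<subseteq> {b, c}"
    using False by (metis finite_Diff subset_doubleton_if_card_le_2)
  have not_dvd: "\<not> int p dvd int a - int u" if "u \<in> S - {a}" for u
  proof -
    have "a \<in> {i..i + d}" "u \<in> {i..i + d}"
      using that a S(1) by auto
    then have "\<bar>int a - int u\<bar> < int p"
      using S(2) by auto
    moreover have "int a - int u \<noteq> 0"
      using that by simp
    ultimately show ?thesis
      using int_dvd_abs_less_eq_0 by blast
  qed
  have "int p dvd f a"
    using bc a not_dvd by (intro prime_dvd_value_if_moments_vanish[OF p _ a _ _ _ _ m0 m1 m2]) auto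
  then show ?thesis
    using int_dvd_abs_less_eq_0 f[OF a] by blast
qed

lemma VT_diff_eq_sum:
  assumes "{t. z t \<noteq> w t} \<subseteq> S" and "S \<subseteq> {1..n}"
  shows "int (VT k n z) - int (VT k n w) = (\<Sum>t\<in>S. int t ^ k * (int (z t) - int (w t)))"
proof -
  have "int (VT k n z) - int (VT k n w) = (\<Sum>t=1..n. int t ^ k * (int (z t) - int (w t)))"
    unfolding VT_def by (simp add: sum_subtractf[symmetric] algebra_simps)
  also have "\<dots> = (\<Sum>t\<in>S. int t ^ k * (int (z t) - int (w t)))"
    using assms by (intro sum.mono_neutral_right) auto
  finally show ?thesis .
qed

lemma Cq4P_moment_congruences:
  assumes z: "z \<in> Cq4P q n a0 a1 a2" and w: "w \<in> Cq4P q n a0 a1 a2"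
    and S: "{t. z t \<noteq> w t} \<subseteq> S" "S \<subseteq> {1..n}"
  shows "int (3 * (q - 1) + 1) dvd (\<Sum>t\<in>S. int (z t) - int (w t))"
    and "int (pval q n) dvd (\<Sum>t\<in>S. int t * (int (z t) - int (w t)))"
    and "int (pval q n) dvd (\<Sum>t\<in>S. (int t)\<^sup>2 * (int (z t) - int (w t)))"
proof -
  have mod0: "VT 0 n z mod (3 * (q - 1) + 1) = VT 0 n w mod (3 * (q - 1) + 1)"
    and mod1: "VT 1 n z mod pval q n = VT 1 n w mod pval q n"
    and mod2: "VT 2 n z mod pval q n = VT 2 n w mod pval q n"
    using z w unfolding Cq4P_def by auto
  show "int (3 * (q - 1) + 1) dvd (\<Sum>t\<in>S. int (z t) - int (w t))"
    using int_dvd_diff_of_mod_eq[OF mod0] VT_diff_eq_sum[OF S, of 0] by simp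
  show "int (pval q n) dvd (\<Sum>t\<in>S. int t * (int (z t) - int (w t)))"
    using int_dvd_diff_of_mod_eq[OF mod1] VT_diff_eq_sum[OF S, of 1] by simp
  show "int (pval q n) dvd (\<Sum>t\<in>S. (int t)\<^sup>2 * (int (z t) - int (w t)))"
    using int_dvd_diff_of_mod_eq[OF mod2] VT_diff_eq_sum[OF S, of 2] by simp
qed

lemma Cq4P_eq_if_few_close_differences:
  assumes z: "z \<in> Cq4P q n a0 a1 a2" and w: "w \<in> Cq4P q n a0 a1 a2"
    and close: "{t. z t \<noteq> w t} \<subseteq> {i..i + d}" "d < pval q n"
    and few: "card {t. z t \<noteq> w t} \<le> 3"
  shows "z = w"
proof -
  define S where "S = {t. z t \<noteq> w t}"
  define f where "f t = int (z t) - int (w t)" for t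
  have zw: "z \<in> seqs q n" "w \<in> seqs q n"
    using z w unfolding Cq4P_def by auto
  then have S_sub: "S \<subseteq> {1..n}"
    unfolding S_def by (rule seqs_differences_subset)
  have S_sup: "{t. z t \<noteq> w t} \<subseteq> S"
    unfolding S_def by simp
  have m0: "int (3 * (q - 1) + 1) dvd (\<Sum>t\<in>S. f t)"
    and m1: "int (pval q n) dvd (\<Sum>t\<in>S. int t * f t)"
    and m2: "int (pval q n) dvd (\<Sum>t\<in>S. (int t)\<^sup>2 * f t)"
    using Cq4P_moment_congruences[OF z w S_sup S_sub] unfolding f_def by simp_all
  have f_bound: "\<bar>f t\<bar> \<le> int q - 1" for t
    using seqs_less[OF zw(1), of t] seqs_less[OF zw(2), of t] unfolding f_def by linarith
  have "\<bar>\<Sum>t\<in>S. f t\<bar> < int (3 * (q - 1) + 1)"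
  proof -
    have "\<bar>\<Sum>t\<in>S. f t\<bar> \<le> (\<Sum>t\<in>S. int q - 1)"
      using f_bound by (intro order.trans[OF sum_abs sum_mono])
    also have "\<dots> = int (card S) * (int q - 1)"
      by simp
    also have "\<dots> \<le> 3 * (int q - 1)"
      using few f_bound[of 0] unfolding S_def by (intro mult_right_mono) auto
    finally have "\<bar>\<Sum>t\<in>S. f t\<bar> \<le> 3 * (int q - 1)" .
    moreover have "1 \<le> q"
      using f_bound[of 0] abs_ge_zero[of "f 0"] by linarith
    ultimately show ?thesis
      by (simp add: of_nat_diff)
  qed
  with m0 have sum_0: "(\<Sum>t\<in>S. f t) = 0"
    by (rule int_dvd_abs_less_eq_0)
  have "f t = 0" if "t \<in> S" for t
  proof (rule moments_vanish_imp_zero[OF pval_prime _ _ _ _ sum_0 m1 m2 that])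
    show "S \<subseteq> {i..i + d}" "d < pval q n" "card S \<le> 3"
      using close few unfolding S_def by simp_all
    show "\<bar>f u\<bar> < int (pval q n)" for u
      using f_bound[of u] pval_ge(1)[of q n] by linarith
  qed
  then have "S = {}"
    unfolding S_def f_def by auto
  then show ?thesis
    unfolding S_def by auto
qed

lemma read2_eq_cases:
  assumes "read2 x r = read2 y r"
  shows "x (r - 1) = y (r - 1) \<and> x r = y r \<or> x (r - 1) = y r \<and> x r = y (r - 1)"
  using assms by (auto simp: read2_def add_eq_conv_ex)

lemma read2_eq_imp_sum_eq:
  assumes "read2 x r = read2 y r"
  shows "x (r - 1) + x r = y (r - 1) + y r"
  using read2_eq_cases[OF assms] by (auto simp: add.commute)

lemma read2_agree_keeps_agreement:
  assumes reads: "\<forall>r\<in>{s<..e}. read2 x r = read2 y r" and "x s = y s"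
    and "s \<le> t" "t \<le> e"
  shows "x t = y t"
  using assms(3,4)
proof (induction t rule: dec_induct)
  case (step t)
  then show ?case
    using read2_eq_cases[of x "Suc t" y] reads by auto
qed (use assms(2) in simp)

lemma read2_agree_keeps_swapping:
  assumes reads: "\<forall>r\<in>{s<..e}. read2 x r = read2 y r" and "x s \<noteq> y s"
    and "s \<le> t" "t \<le> e"
  shows "x t = (if even (t - s) then x s else y s) \<and> y t = (if even (t - s) then y s else x s)"
  using assms(3,4)
proof (induction t rule: dec_induct)
  case (step t)
  then have "x t \<noteq> y t"
    using \<open>x s \<noteq> y s\<close> by (auto split: if_splits)
  then have "x (Suc t) = y t \<and> y (Suc t) = x t"
    using read2_eq_cases[of x "Suc t" y] reads step by auto
  then show ?case
    using step by (simp add: Suc_diff_le)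
qed simp

lemma alternating_block_if_read2_agree:
  assumes "\<forall>r\<in>{s<..e}. read2 x r = read2 y r" and "x s \<noteq> y s" and "s \<le> e"
  shows "alternating_block x s (e - s + 1)"
  unfolding alternating_block_def
proof (intro exI conjI allI impI)
  show "x s \<noteq> y s" by fact
  fix t assume "t < e - s + 1"
  then have "s + t \<le> e"
    using assms(3) by linarith
  then show "x (s + t) = (if even t then x s else y s)"
    using read2_agree_keeps_swapping[OF assms(1,2), of "s + t"] by simp
qed

definition read_differences :: "nat \<Rightarrow> (nat \<Rightarrow> nat) \<Rightarrow> (nat \<Rightarrow> nat) \<Rightarrow> nat set" where
  "read_differences n x y = {r \<in> {1..n + 1}. read2 x r \<noteq> read2 y r}"

lemma finite_read_differences: "finite (read_differences n x y)"
  by (simp add: read_differences_def)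

lemma read_dist_eq_card: "read_dist n x y = card (read_differences n x y)"
  by (simp add: read_dist_def read_differences_def)

lemma indic_differences_subset_read_differences:
  "{t. indic q n x t \<noteq> indic q n y t} \<subseteq> read_differences n x y"
proof
  fix t assume "t \<in> {t. indic q n x t \<noteq> indic q n y t}"
  then have t: "1 \<le> t" "t \<le> n" and "(x t + x (t - 1)) mod q \<noteq> (y t + y (t - 1)) mod q"
    unfolding indic_def by (auto split: if_splits)
  then have "read2 x t \<noteq> read2 y t"
    using read2_eq_imp_sum_eq[of x t y] by (metis add.commute)
  then show "t \<in> read_differences n x y"
    using t unfolding read_differences_def by simp
qed

lemma indic_inj_on_seqs:
  assumes x: "x \<in> seqs q n" and y: "y \<in> seqs q n" and eq: "indic q n x = indic q n y"
  shows "x = y"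
proof
  fix t show "x t = y t"
  proof (induction t)
    case 0
    then show ?case using seqs_eq_0[OF x] seqs_eq_0[OF y] by simp
  next
    case (Suc t)
    show ?case
    proof (cases "Suc t \<le> n")
      case True
      then have "(x (Suc t) + x t) mod q = (y (Suc t) + x t) mod q"
        using fun_cong[OF eq, of "Suc t"] Suc.IH unfolding indic_def by simp
      then show ?thesis
        by (rule mod_add_right_cancel_less[OF seqs_less[OF x] seqs_less[OF y]])
    qed (use seqs_eq_0[OF x] seqs_eq_0[OF y] in simp)
  qed
qed

lemma read_differences_within_mismatches:
  assumes x: "x \<in> seqs q n" and y: "y \<in> seqs q n" and "x \<noteq> y"
  obtains i j where "1 \<le> i" "i \<le> j" "j \<le> n" "x i \<noteq> y i" "x j \<noteq> y j"
    "read_differences n x y \<subseteq> {i..j + 1}" "i \<in> read_differences n x y" "j + 1 \<in> read_differences n x y"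
proof -
  define M where "M = {t. x t \<noteq> y t}"
  have M: "M \<subseteq> {1..n}" "finite M" "M \<noteq> {}"
    using seqs_differences_subset[OF x y] \<open>x \<noteq> y\<close> finite_subset unfolding M_def by auto
  define i j where "i = Min M" and "j = Max M"
  have ij: "i \<in> M" "j \<in> M" "\<And>t. t \<in> M \<Longrightarrow> i \<le> t \<and> t \<le> j"
    using M unfolding i_def j_def by auto
  then have outside: "x t = y t" if "t < i \<or> j < t" for t
    using that unfolding M_def by force
  have sub: "read_differences n x y \<subseteq> {i..j + 1}"
  proof
    fix r assume "r \<in> read_differences n x y"
    then have differ: "read2 x r \<noteq> read2 y r"
      by (simp add: read_differences_def)
    show "r \<in> {i..j + 1}"
    proof (rule ccontr)
      assume "r \<notin> {i..j + 1}"
      then have "r < i \<or> j < r" "r - 1 < i \<or> j < r - 1"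
        by auto
      then have "x r = y r" "x (r - 1) = y (r - 1)"
        using outside by blast+
      with differ show False
        by (simp add: read2_def)
    qed
  qed
  have bounds: "1 \<le> i" "i \<le> j" "j \<le> n" "x i \<noteq> y i" "x j \<noteq> y j"
    using ij M(1) unfolding M_def by auto
  have i_in: "i \<in> read_differences n x y"
  proof -
    have "x (i - 1) = y (i - 1)" "x i \<noteq> y i" "1 \<le> i" "i \<le> n"
      using ij M(1) outside[of "i - 1"] unfolding M_def by auto
    then show ?thesis
      using read2_eq_cases[of x i y] unfolding read_differences_def by auto
  qed
  have j_in: "j + 1 \<in> read_differences n x y"
  proof -
    have "x (j + 1) = y (j + 1)" "x j \<noteq> y j" "j \<le> n"
      using ij M(1) outside[of "j + 1"] unfolding M_def by auto
    then show ?thesis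
      using read2_eq_cases[of x "j + 1" y] unfolding read_differences_def by auto
  qed
  show ?thesis
    by (rule that[OF bounds sub i_in j_in])
qed

lemma ALL_set_block_le:
  assumes "x \<in> ALL_set q n L" and "alternating_block x s m" "1 \<le> s" "1 \<le> m" "s + m - 1 \<le> n"
  shows "m \<le> L"
  using assms unfolding ALL_set_def by blast

lemma ALL_set_mismatch_run_le:
  assumes x: "x \<in> ALL_set q n L" and "\<forall>r\<in>{s<..e}. read2 x r = read2 y r" and "x s \<noteq> y s"
    and "1 \<le> s" "s \<le> e" "e \<le> n"
  shows "e - s + 1 \<le> L"
proof -
  have "alternating_block x s (e - s + 1)"
    using assms(2,3,5) by (rule alternating_block_if_read2_agree)
  then show ?thesis
    by (rule ALL_set_block_le[OF x]) (use assms(4-6) in auto)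
qed

lemma card_le_3_between_unique:
  fixes D :: "nat set"
  assumes "finite D" "card D \<le> 3" "{a, k, r, b} \<subseteq> D" "a < k" "a < r" "k < b" "r < b"
  shows "k = r"
proof (rule ccontr)
  assume "k \<noteq> r"
  then have "card {a, k, r, b} = 4"
    using assms(4-7) by auto
  moreover have "card {a, k, r, b} \<le> card D"
    using assms(1,3) by (rule card_mono)
  ultimately show False
    using assms(2) by linarith
qed

lemma read_differences_span:
  assumes x: "x \<in> ALL_set q n L" and y: "y \<in> seqs q n" and "x \<noteq> y"
    and few: "card (read_differences n x y) \<le> 3"
  obtains i where "read_differences n x y \<subseteq> {i..i + 2 * L}"
proof -
  let ?D = "read_differences n x y"
  have xs: "x \<in> seqs q n" using x by (simp add: ALL_set_def)
  obtain i j where ij: "1 \<le> i" "i \<le> j" "j \<le> n" "x i \<noteq> y i" "x j \<noteq> y j"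
    and D: "?D \<subseteq> {i..j + 1}" "i \<in> ?D" "j + 1 \<in> ?D"
    using read_differences_within_mismatches[OF xs y \<open>x \<noteq> y\<close>] by blast
  have agree: "\<forall>r\<in>{s<..e}. read2 x r = read2 y r"
    if "i \<le> s" "e \<le> j" "\<forall>r\<in>{s<..e}. r \<notin> ?D" for s e
    using that ij(3) unfolding read_differences_def by auto
  have "j + 1 \<le> i + 2 * L"
  proof (cases "\<exists>k\<in>?D. i < k \<and> k \<le> j")
    case True
    then obtain k where k: "k \<in> ?D" "i < k" "k \<le> j" by blast
    have only_k: "r \<notin> ?D" if "i < r" "r \<le> j" "r \<noteq> k" for r
    proof
      assume "r \<in> ?D"
      then have "k = r"
        using D(2,3) k that
        by (intro card_le_3_between_unique[OF finite_read_differences few, of i k r "j + 1"]) auto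
      with that(3) show False
        by simp
    qed
    have left: "\<forall>r\<in>{i<..k - 1}. read2 x r = read2 y r"
      using k only_k by (intro agree) auto
    have right: "\<forall>r\<in>{k<..j}. read2 x r = read2 y r"
      using k only_k by (intro agree) auto
    \<comment> \<open>The read difference \<open>k\<close> cuts the mismatch window into two alternating runs.\<close>
    have "x k \<noteq> y k"
      using read2_agree_keeps_agreement[OF right _ k(3) order_refl] ij(5) by blast
    have "k - 1 - i + 1 \<le> L"
      by (rule ALL_set_mismatch_run_le[OF x left ij(4)]) (use k ij in auto)
    moreover have "j - k + 1 \<le> L"
      by (rule ALL_set_mismatch_run_le[OF x right \<open>x k \<noteq> y k\<close>]) (use k ij in auto)
    ultimately show ?thesis
      using k by linarith
  next
    case False
    then have reads: "\<forall>r\<in>{i<..j}. read2 x r = read2 y r"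
      by (intro agree) auto
    have "j - i + 1 \<le> L"
      by (rule ALL_set_mismatch_run_le[OF x reads ij(4)]) (use ij in auto)
    then show ?thesis
      by linarith
  qed
  then show ?thesis
    using D(1) that by fastforce
qed

lemma two_mul_alternation_bound_less_pval: "2 * nat ((Pval q n - 1) div 2) < pval q n"
proof -
  have "2 * nat ((Pval q n - 1) div 2) < nat (Pval q n) \<or> Pval q n \<le> 0"
    unfolding Pval_def by linarith
  then show ?thesis
    using pval_ge(2)[of q n] pval_prime[of q n] prime_gt_0_nat by fastforce
qed

lemma code_is_2read_code: "is_2read_code q n 4 (code q n a0 a1 a2)"
proof -
  define L where "L = nat ((Pval q n - 1) div 2)"
  have code: "x \<in> ALL_set q n L" "indic q n x \<in> Cq4P q n a0 a1 a2" "x \<in> seqs q n"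
    if "x \<in> code q n a0 a1 a2" for x
    using that unfolding code_def L_def ALL_set_def by auto
  have "4 \<le> read_dist n x y"
    if x: "x \<in> code q n a0 a1 a2" and y: "y \<in> code q n a0 a1 a2" and "x \<noteq> y" for x y
  proof (rule ccontr)
    assume "\<not> 4 \<le> read_dist n x y"
    then have few: "card (read_differences n x y) \<le> 3"
      by (simp add: read_dist_eq_card)
    obtain i where span: "read_differences n x y \<subseteq> {i..i + 2 * L}"
      using read_differences_span[OF code(1)[OF x] code(3)[OF y] \<open>x \<noteq> y\<close> few] .
    have sub: "{t. indic q n x t \<noteq> indic q n y t} \<subseteq> read_differences n x y"
      by (rule indic_differences_subset_read_differences)
    have "indic q n x = indic q n y"
    proof (rule Cq4P_eq_if_few_close_differences[OF code(2)[OF x] code(2)[OF y]])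
      show "{t. indic q n x t \<noteq> indic q n y t} \<subseteq> {i..i + 2 * L}"
        using sub span by blast
      show "2 * L < pval q n"
        unfolding L_def by (rule two_mul_alternation_bound_less_pval)
      show "card {t. indic q n x t \<noteq> indic q n y t} \<le> 3"
        using card_mono[OF _ sub] few by (simp add: read_differences_def)
    qed
    then show False
      using indic_inj_on_seqs code(3) x y \<open>x \<noteq> y\<close> by blast
  qed
  then show ?thesis
    unfolding is_2read_code_def using code(3) by blast
qed

section \<open>Bertrand's postulate\<close>

lemma multiplicity_Suc_eq_card:
  assumes p: "prime (p::nat)" and a: "Suc n < p ^ B"
  shows "multiplicity p (Suc n) = card {j\<in>{1..B}. p ^ j dvd Suc n}"
proof -
  have iff: "p ^ j dvd Suc n \<longleftrightarrow> j \<le> multiplicity p (Suc n)" for j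
    using p by (intro power_dvd_iff_le_multiplicity) auto
  have "p ^ multiplicity p (Suc n) \<le> Suc n"
    by (intro dvd_imp_le) (simp_all add: iff)
  then have "multiplicity p (Suc n) < B"
    using a p prime_gt_1_nat by (metis order.strict_trans1 power_less_imp_less_exp)
  then have "{j\<in>{1..B}. p ^ j dvd Suc n} = {1..multiplicity p (Suc n)}"
    unfolding iff by auto
  then show ?thesis by simp
qed

lemma multiplicity_fact:
  assumes p: "prime (p::nat)" and n: "n < p ^ B"
  shows "multiplicity p (fact n :: nat) = (\<Sum>j=1..B. n div p ^ j)"
  using n
proof (induction n)
  case (Suc n)
  have "multiplicity p (fact (Suc n) :: nat) = multiplicity p (Suc n * fact n)"
    by (simp only: fact_Suc of_nat_id)
  also have "\<dots> = multiplicity p (Suc n) + multiplicity p (fact n :: nat)"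
    using p by (intro prime_elem_multiplicity_mult_distrib) auto
  also have "multiplicity p (Suc n) = (\<Sum>j=1..B. if p ^ j dvd Suc n then 1 else 0)"
    using multiplicity_Suc_eq_card[OF p Suc.prems] by (simp add: sum.inter_filter[symmetric])
  also have "multiplicity p (fact n :: nat) = (\<Sum>j=1..B. n div p ^ j)"
    using Suc by simp
  also have "(\<Sum>j=1..B. if p ^ j dvd Suc n then 1 else 0) + (\<Sum>j=1..B. n div p ^ j)
      = (\<Sum>j=1..B. Suc n div p ^ j)"
    using p by (auto simp: sum.distrib[symmetric] div_Suc dvd_eq_mod_eq_0 prime_gt_0_nat intro!: sum.cong)
  finally show ?case .
qed simp

lemma double_div_bounds:
  fixes m d :: nat
  shows "2 * (m div d) \<le> (2 * m) div d" and "(2 * m) div d \<le> 2 * (m div d) + 1"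
proof -
  have "(2 * m) div d = 2 * (m div d) + (2 * (m mod d)) div d"
  proof (cases "d = 0")
    case False
    have "2 * m = 2 * (m mod d) + 2 * (m div d) * d"
      using div_mult_mod_eq[of m d] by linarith
    then show ?thesis
      using False by simp
  qed simp
  moreover have "(2 * (m mod d)) div d \<le> 1"
  proof (cases "d = 0")
    case False
    then have "2 * (m mod d) < 2 * d"
      by simp
    then have "(2 * (m mod d)) div d < 2"
      by (intro less_mult_imp_div_less) simp
    then show ?thesis
      by simp
  qed simp
  ultimately show "2 * (m div d) \<le> (2 * m) div d" "(2 * m) div d \<le> 2 * (m div d) + 1"
    by simp_all
qed

lemma multiplicity_central_binomial:
  assumes p: "prime (p::nat)" and B: "2 * m < p ^ B"
  shows "multiplicity p ((2 * m) choose m) = (\<Sum>j=1..B. (2 * m) div p ^ j - 2 * (m div p ^ j))"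
proof -
  have "fact (2 * m) = fact m * fact m * ((2 * m) choose m :: nat)"
    using binomial_fact_lemma[of m "2 * m"] by (simp add: mult_2)
  then have "multiplicity p (fact (2 * m) :: nat)
      = 2 * multiplicity p (fact m :: nat) + multiplicity p ((2 * m) choose m)"
    using p by (simp add: prime_elem_multiplicity_mult_distrib)
  then have "multiplicity p ((2 * m) choose m) = (\<Sum>j=1..B. (2 * m) div p ^ j) - (\<Sum>j=1..B. 2 * (m div p ^ j))"
    using multiplicity_fact[OF p B] multiplicity_fact[OF p, of m B] B by (simp add: sum_distrib_left)
  also have "\<dots> = (\<Sum>j=1..B. (2 * m) div p ^ j - 2 * (m div p ^ j))"
    by (rule sum_subtractf_nat[symmetric]) (use double_div_bounds in blast)
  finally show ?thesis .
qed

lemma prime_power_multiplicity_central_binomial_le: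
  assumes p: "prime (p::nat)" and m: "0 < m"
  shows "p ^ multiplicity p ((2 * m) choose m) \<le> 2 * m"
proof (rule ccontr)
  define v where "v = multiplicity p ((2 * m) choose m)"
  assume "\<not> p ^ multiplicity p ((2 * m) choose m) \<le> 2 * m"
  then have big: "2 * m < p ^ v" unfolding v_def by simp
  then obtain u where u: "v = Suc u" using m by (cases v) auto
  have "v = (\<Sum>j=1..v. (2 * m) div p ^ j - 2 * (m div p ^ j))"
    unfolding v_def using multiplicity_central_binomial[OF p big] by (simp add: v_def)
  also have "\<dots> = (\<Sum>j=1..u. (2 * m) div p ^ j - 2 * (m div p ^ j))"
    using big u by simp
  also have "\<dots> \<le> (\<Sum>j=1..u. 1)"
    by (intro sum_mono) (use double_div_bounds in \<open>simp add: le_diff_conv\<close>)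
  finally show False using u by simp
qed

lemma prime_power_multiplicity_central_binomial_dvd:
  assumes p: "prime (p::nat)" and "0 < m" "2 * m < p\<^sup>2"
  shows "p ^ multiplicity p ((2 * m) choose m) dvd p"
proof -
  have "p ^ multiplicity p ((2 * m) choose m) < p ^ 2"
    using prime_power_multiplicity_central_binomial_le[OF assms(1,2)] assms(3) by linarith
  then have "multiplicity p ((2 * m) choose m) < 2"
    using prime_gt_1_nat[OF p] power_less_imp_less_exp by blast
  then consider "multiplicity p ((2 * m) choose m) = 0" | "multiplicity p ((2 * m) choose m) = 1"
    by linarith
  then show ?thesis
    by cases simp_all
qed

lemma multiplicity_central_binomial_eq_0:
  assumes p: "prime (p::nat)" and "p \<le> m" "2 * m < 3 * p" "2 * m < p\<^sup>2"
  shows "multiplicity p ((2 * m) choose m) = 0"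
proof -
  have "(2 * m) div p = 2" "m div p = 1"
    using assms by (auto intro!: div_nat_eqI)
  then show ?thesis
    using multiplicity_central_binomial[OF p \<open>2 * m < p\<^sup>2\<close>] assms(4) by (simp add: numeral_2_eq_2)
qed

lemma binomial_odd_central_le: "(2 * k + 1) choose k \<le> 4 ^ k"
proof -
  have "2 * ((2 * k + 1) choose k) = (\<Sum>i\<in>{k, k + 1}. (2 * k + 1) choose i)"
    using binomial_symmetric[of "k + 1" "2 * k + 1"] by simp
  also have "\<dots> \<le> (\<Sum>i\<le>2 * k + 1. (2 * k + 1) choose i)"
    by (rule sum_mono2) auto
  also have "\<dots> = 2 ^ (2 * k + 1)"
    by (rule choose_row_sum)
  also have "\<dots> = 2 * 4 ^ k"
    by (simp add: power_mult)
  finally show ?thesis by simp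
qed

lemma prod_primes_between_dvd_binomial:
  "\<Prod>{p::nat. prime p \<and> k + 1 < p \<and> p \<le> 2 * k + 1} dvd (2 * k + 1) choose k"
proof -
  define C where "C = (2 * k + 1) choose k"
  have C: "C \<noteq> 0" unfolding C_def by simp
  have fact_eq: "fact k * fact (k + 1) * C = (fact (2 * k + 1) :: nat)"
    using binomial_fact_lemma[of k "2 * k + 1"] unfolding C_def by (simp add: ac_simps)
  have sub: "{p. prime p \<and> k + 1 < p \<and> p \<le> 2 * k + 1} \<subseteq> prime_factors C"
  proof
    fix p :: nat assume "p \<in> {p. prime p \<and> k + 1 < p \<and> p \<le> 2 * k + 1}"
    then have p: "prime p" "k + 1 < p" "p \<le> 2 * k + 1" by auto
    then have "p dvd fact k * fact (k + 1) * C"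
      unfolding fact_eq using prime_dvd_fact_iff[of p "2 * k + 1"] by (simp del: fact_Suc)
    moreover have "\<not> p dvd fact k * (fact (k + 1) :: nat)"
      using p prime_dvd_fact_iff[of p k] prime_dvd_fact_iff[of p "k + 1"]
      by (simp add: prime_dvd_mult_iff del: fact_Suc)
    ultimately show "p \<in> prime_factors C"
      using p C by (auto simp: prime_dvd_mult_iff prime_factors_dvd)
  qed
  have "\<Prod>{p. prime p \<and> k + 1 < p \<and> p \<le> 2 * k + 1} dvd (\<Prod>p\<in>prime_factors C. p ^ multiplicity p C)"
    by (rule prod_dvd_prod_subset2[OF finite_set_mset sub])
      (use sub in \<open>auto simp: prime_factors_multiplicity intro!: dvd_power\<close>)
  then show ?thesis
    using prime_factorization_nat[of C] C unfolding C_def by simp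
qed

lemma prod_primes_between_le_four_pow: "\<Prod>{p::nat. prime p \<and> k + 1 < p \<and> p \<le> 2 * k + 1} \<le> 4 ^ k"
  by (rule order.trans[OF dvd_imp_le[OF prod_primes_between_dvd_binomial] binomial_odd_central_le]) simp

lemma prod_primes_le_four_pow: "\<Prod>{p::nat. prime p \<and> p \<le> x} \<le> 4 ^ x"
proof (induction x rule: less_induct)
  case (less x)
  consider "x \<le> 2" | "x > 2" "even x" | k where "x = 2 * k + 1" "k \<ge> 1"
    by (cases "x \<le> 2"; cases "even x") (auto elim!: oddE)
  then show ?case
  proof cases
    case 1
    then have "{p::nat. prime p \<and> p \<le> x} = (if x = 2 then {2} else {})"
      by (auto dest: prime_gt_1_nat)
    then show ?thesis
      by simp
  next
    case 2
    then have "\<not> prime x"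
      using prime_odd_nat by blast
    then have "p \<le> x \<longleftrightarrow> p \<le> x - 1" if "prime p" for p
      using that by (cases "p = x") auto
    then have "{p. prime p \<and> p \<le> x} = {p. prime p \<and> p \<le> x - 1}"
      by blast
    then show ?thesis
      using less.IH[of "x - 1"] 2 by (simp add: order.trans[OF _ power_increasing])
  next
    case 3
    have split: "{p::nat. prime p \<and> p \<le> x}
        = {p. prime p \<and> p \<le> k + 1} \<union> {p. prime p \<and> k + 1 < p \<and> p \<le> 2 * k + 1}"
      using 3 by auto
    have "\<Prod>{p::nat. prime p \<and> p \<le> x}
        = \<Prod>{p. prime p \<and> p \<le> k + 1} * \<Prod>{p. prime p \<and> k + 1 < p \<and> p \<le> 2 * k + 1}"
      unfolding split by (intro prod.union_disjoint) auto
    also have "\<dots> \<le> 4 ^ (k + 1) * 4 ^ k"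
    proof (intro mult_le_mono)
      show "\<Prod>{p. prime p \<and> p \<le> k + 1} \<le> 4 ^ (k + 1)"
        using less.IH[of "k + 1"] 3 by simp
      show "\<Prod>{p. prime p \<and> k + 1 < p \<and> p \<le> 2 * k + 1} \<le> 4 ^ k"
        by (rule prod_primes_between_le_four_pow)
    qed
    also have "\<dots> = 4 ^ x"
      using 3 by (simp add: power_add[symmetric])
    finally show ?thesis .
  qed
qed

lemma prime_factor_central_binomial_le:
  assumes m: "5 \<le> m" and no_prime: "\<nexists>p. prime p \<and> m < p \<and> p \<le> 2 * m"
    and p: "p \<in> prime_factors ((2 * m) choose m)"
  shows "3 * p \<le> 2 * m"
proof (rule ccontr)
  assume "\<not> 3 * p \<le> 2 * m"
  then have p3: "2 * m < 3 * p" by simp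
  have prime: "prime p" and mult: "multiplicity p ((2 * m) choose m) > 0"
    using p by (auto simp: prime_factors_multiplicity)
  have "fact (2 * m) = fact m * fact m * ((2 * m) choose m :: nat)"
    using binomial_fact_lemma[of m "2 * m"] by (simp add: mult_2)
  then have "p dvd fact (2 * m)"
    using p by (metis dvd_mult in_prime_factors_imp_dvd)
  then have "p \<le> m"
    using no_prime prime by (meson not_le prime_dvd_fact_iff)
  moreover have "2 * m < p\<^sup>2"
  proof -
    have "4 \<le> p" using p3 m by linarith
    then have "4 * p \<le> p * p" by (rule mult_le_mono1)
    then show ?thesis using p3 unfolding power2_eq_square by linarith
  qed
  ultimately show False
    using multiplicity_central_binomial_eq_0[OF prime _ p3] mult by simp
qed

(* Erdos: prime powers dividing C(2m, m) are at most 2m, primes above sqrt(2m) divide it at most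
   once, and without primes in (m, 2m] no prime factor exceeds 2m/3. *)
lemma central_binomial_le_if_no_prime:
  assumes m: "5 \<le> m" and no_prime: "\<nexists>p. prime p \<and> m < p \<and> p \<le> 2 * m"
  defines "N \<equiv> (2 * m) choose m"
  shows "N \<le> (2 * m) ^ card {p \<in> prime_factors N. p\<^sup>2 \<le> 2 * m} * 4 ^ (2 * m div 3)"
proof -
  define small where "small = {p \<in> prime_factors N. p\<^sup>2 \<le> 2 * m}"
  define large where "large = {p \<in> prime_factors N. 2 * m < p\<^sup>2}"
  have N: "N \<noteq> 0" unfolding N_def by simp
  have power_le: "p ^ multiplicity p N \<le> 2 * m" if "p \<in> prime_factors N" for p
    using that m unfolding N_def by (intro prime_power_multiplicity_central_binomial_le) auto
  have large_primes: "large \<subseteq> {p. prime p \<and> p \<le> 2 * m div 3}"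
  proof
    fix p assume "p \<in> large"
    then have "prime p" "3 * p \<le> 2 * m"
      using prime_factor_central_binomial_le[OF m no_prime, of p] unfolding large_def N_def by auto
    then show "p \<in> {p. prime p \<and> p \<le> 2 * m div 3}"
      by simp
  qed
  have large_dvd: "p ^ multiplicity p N dvd p" if "p \<in> large" for p
    using that m unfolding large_def N_def
    by (intro prime_power_multiplicity_central_binomial_dvd) (auto intro: in_prime_factors_imp_prime)
  have "N = (\<Prod>p\<in>prime_factors N. p ^ multiplicity p N)"
    using prime_factorization_nat N by blast
  also have "\<dots> = (\<Prod>p\<in>small. p ^ multiplicity p N) * (\<Prod>p\<in>large. p ^ multiplicity p N)"
    unfolding small_def large_def by (subst prod.union_disjoint[symmetric]) (auto intro!: prod.cong)
  also have "\<dots> \<le> (2 * m) ^ card small * 4 ^ (2 * m div 3)"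
  proof (rule mult_le_mono)
    show "(\<Prod>p\<in>small. p ^ multiplicity p N) \<le> (2 * m) ^ card small"
      using prod_mono[of small "\<lambda>p. p ^ multiplicity p N" "\<lambda>_. 2 * m"] power_le
      unfolding small_def by simp
    have "finite {p::nat. prime p \<and> p \<le> 2 * m div 3}"
      by (rule finite_subset[of _ "{..2 * m div 3}"]) auto
    then have "(\<Prod>p\<in>large. p ^ multiplicity p N) dvd \<Prod>{p. prime p \<and> p \<le> 2 * m div 3}"
      using large_primes large_dvd by (intro prod_dvd_prod_subset2) auto
    then show "(\<Prod>p\<in>large. p ^ multiplicity p N) \<le> 4 ^ (2 * m div 3)"
      by (rule order.trans[OF dvd_imp_le prod_primes_le_four_pow])
        (auto intro!: prod_pos dest: prime_gt_0_nat)
  qed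
  finally show ?thesis
    unfolding small_def .
qed

lemma card_le_sqrt_if_squares_le:
  fixes A :: "nat set"
  assumes "0 \<notin> A" and "\<And>a. a \<in> A \<Longrightarrow> a\<^sup>2 \<le> n"
  shows "real (card A) \<le> sqrt (real n)"
proof -
  have "A \<subseteq> {1..nat \<lfloor>sqrt (real n)\<rfloor>}"
  proof
    fix a assume a: "a \<in> A"
    then have "real a \<le> sqrt (real n)"
      using assms(2) by (intro real_le_rsqrt) (simp flip: of_nat_power)
    moreover have "a \<noteq> 0"
      using a assms(1) by metis
    ultimately show "a \<in> {1..nat \<lfloor>sqrt (real n)\<rfloor>}"
      by (auto intro: le_nat_floor)
  qed
  then have "card A \<le> nat \<lfloor>sqrt (real n)\<rfloor>"
    using card_mono[of "{1..nat \<lfloor>sqrt (real n)\<rfloor>}" A] by simp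
  then have "real (card A) \<le> real (nat \<lfloor>sqrt (real n)\<rfloor>)"
    by (simp only: of_nat_le_iff)
  also have "\<dots> \<le> sqrt (real n)"
    by simp
  finally show ?thesis .
qed

lemma central_binomial_le_powr_if_no_prime:
  assumes m: "5 \<le> m" and no_prime: "\<nexists>p. prime p \<and> m < p \<and> p \<le> 2 * m"
  shows "real ((2 * m) choose m) \<le> (2 * real m) powr sqrt (2 * real m) * 4 powr (2 * real m / 3)"
proof -
  define N where "N = (2 * m) choose m"
  define s where "s = card {p \<in> prime_factors N. p\<^sup>2 \<le> 2 * m}"
  have "real s \<le> sqrt (real (2 * m))"
    unfolding s_def
  proof (rule card_le_sqrt_if_squares_le)
    show "0 \<notin> {p \<in> prime_factors N. p\<^sup>2 \<le> 2 * m}"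
      using in_prime_factors_imp_prime[of 0 N] by auto
  qed simp
  then have s: "real s \<le> sqrt (2 * real m)"
    by simp
  have "real N \<le> real ((2 * m) ^ s * 4 ^ (2 * m div 3))"
    using central_binomial_le_if_no_prime[OF m no_prime] unfolding N_def s_def
    by (simp only: of_nat_le_iff)
  also have "\<dots> = (2 * real m) ^ s * 4 ^ (2 * m div 3)"
    by simp
  also have "\<dots> \<le> (2 * real m) powr sqrt (2 * real m) * 4 powr (2 * real m / 3)"
  proof (rule mult_mono)
    have "(2 * real m) ^ s = (2 * real m) powr real s"
      using m by (simp add: powr_realpow)
    also have "\<dots> \<le> (2 * real m) powr sqrt (2 * real m)"
      using s m by (intro powr_mono) auto
    finally show "(2 * real m) ^ s \<le> (2 * real m) powr sqrt (2 * real m)" .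
    have "real (2 * m div 3) \<le> 2 * real m / 3"
      by linarith
    then show "4 ^ (2 * m div 3) \<le> (4::real) powr (2 * real m / 3)"
      by (simp add: powr_realpow[symmetric] powr_mono)
  qed simp_all
  finally show ?thesis
    unfolding N_def .
qed

lemma bertrand_eventually: "eventually (\<lambda>m. \<exists>p. prime p \<and> m < p \<and> p \<le> 2 * m) sequentially"
proof -
  have "eventually (\<lambda>x::real. 2 * x * (2 * x) powr sqrt (2 * x) * 4 powr (2 * x / 3) < 4 powr x) at_top"
    by real_asymp
  then have "eventually (\<lambda>m. 2 * real m * (2 * real m) powr sqrt (2 * real m) * 4 powr (2 * real m / 3)
      < 4 powr real m) sequentially"
    by (rule eventually_compose_filterlim[OF _ filterlim_real_sequentially])
  moreover have "eventually (\<lambda>m::nat. 5 \<le> m) sequentially"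
    by (rule eventually_ge_at_top)
  ultimately show ?thesis
  proof eventually_elim
    case (elim m)
    show ?case
    proof (rule ccontr)
      assume no_prime: "\<nexists>p. prime p \<and> m < p \<and> p \<le> 2 * m"
      have "4 powr real m = (4::real) ^ m"
        by (simp add: powr_realpow)
      also have "\<dots> \<le> 2 * real m * real ((2 * m) choose m)"
        using central_binomial_lower_bound[of m] elim(2) by (simp add: pos_divide_le_eq mult.commute)
      also have "\<dots> \<le> 2 * real m * ((2 * real m) powr sqrt (2 * real m) * 4 powr (2 * real m / 3))"
        using central_binomial_le_powr_if_no_prime[OF elim(2) no_prime] by (simp add: mult_left_mono)
      finally show False
        using elim(1) by (simp add: mult.assoc)
    qed
  qed
qed

section \<open>Counting codewords\<close>

lemma inj_on_restrict_seqs: "inj_on (\<lambda>x. restrict x {1..n}) (seqs q n)"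
proof (rule inj_onI)
  fix x y assume x: "x \<in> seqs q n" and y: "y \<in> seqs q n"
    and eq: "restrict x {1..n} = restrict y {1..n}"
  show "x = y"
  proof
    fix t show "x t = y t"
      using fun_cong[OF eq, of t] seqs_eq_0[OF x, of t] seqs_eq_0[OF y, of t]
      by (cases "t \<in> {1..n}") auto
  qed
qed

lemma card_seqs_agreeing_le:
  assumes "T \<subseteq> {1..n}"
  shows "card {x \<in> seqs q n. \<forall>t\<in>T. x t = c t} \<le> q ^ (n - card T)"
proof -
  let ?S = "{x \<in> seqs q n. \<forall>t\<in>T. x t = c t}"
  let ?P = "PiE {1..n} (\<lambda>t. if t \<in> T then {c t} else {..<q})"
  have "card ?S = card ((\<lambda>x. restrict x {1..n}) ` ?S)"
    by (rule card_image[symmetric]) (rule inj_on_subset[OF inj_on_restrict_seqs], auto)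
  also have "\<dots> \<le> card ?P"
    by (rule card_mono) (auto simp: finite_PiE seqs_def)
  also have "\<dots> = (\<Prod>t\<in>{1..n}. if t \<in> T then 1 else q)"
    by (auto simp: card_PiE intro!: prod.cong)
  also have "\<dots> = q ^ card ({1..n} - T)"
    by (simp add: prod.If_cases Diff_eq)
  also have "card ({1..n} - T) = n - card T"
    using assms by (simp add: card_Diff_subset finite_subset)
  finally show ?thesis .
qed

lemma card_seqs:
  assumes "0 < q"
  shows "card (seqs q n) = q ^ n"
proof -
  have "(\<lambda>x. restrict x {1..n}) ` seqs q n = PiE {1..n} (\<lambda>_. {..<q})"
  proof
    show "(\<lambda>x. restrict x {1..n}) ` seqs q n \<subseteq> PiE {1..n} (\<lambda>_. {..<q})"
      by (auto simp: seqs_def)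
    show "PiE {1..n} (\<lambda>_. {..<q}) \<subseteq> (\<lambda>x. restrict x {1..n}) ` seqs q n"
    proof
      fix f assume f: "f \<in> PiE {1..n} (\<lambda>_. {..<q})"
      then have "(\<lambda>t. if t \<in> {1..n} then f t else 0) \<in> seqs q n"
        using assms by (auto simp: seqs_def)
      moreover have "f = restrict (\<lambda>t. if t \<in> {1..n} then f t else 0) {1..n}"
        using f by (auto simp: PiE_def extensional_def)
      ultimately show "f \<in> (\<lambda>x. restrict x {1..n}) ` seqs q n"
        by blast
    qed
  qed
  then show ?thesis
    using card_image[OF inj_on_restrict_seqs, of n q] by (simp add: card_PiE)
qed

lemma finite_seqs: "finite (seqs q n)"
proof (rule finite_imageD[OF _ inj_on_restrict_seqs])
  show "finite ((\<lambda>x. restrict x {1..n}) ` seqs q n)"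
    by (rule finite_subset[of _ "PiE {1..n} (\<lambda>_. {..<q})"]) (auto simp: seqs_def finite_PiE)
qed

lemma seqs_minus_ALL_set_subset:
  "seqs q n - ALL_set q n L \<subseteq> (\<Union>(i, a, b) \<in> {1..n - L} \<times> {..<q} \<times> {..<q}.
     {x \<in> seqs q n. \<forall>t\<in>{i..i + L}. x t = (if even (t - i) then a else b)})"
proof
  fix x assume "x \<in> seqs q n - ALL_set q n L"
  then obtain i m where x: "x \<in> seqs q n" and im: "1 \<le> i" "\<not> m \<le> L" "i + m - 1 \<le> n"
    and "alternating_block x i m"
    unfolding ALL_set_def by blast
  then obtain a b where block: "\<forall>t<m. x (i + t) = (if even t then a else b)"
    unfolding alternating_block_def by blast
  have "x t = (if even (t - i) then x i else x (i + 1))" if "t \<in> {i..i + L}" for t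
  proof -
    have "t - i < m" "t = i + (t - i)"
      using that im(2) by auto
    then have "x t = (if even (t - i) then a else b)"
      using block by metis
    moreover have "x i = a"
      using block[rule_format, of 0] im(2) by simp
    moreover have "x (i + 1) = b" if "odd (t - i)"
      using block[rule_format, of 1] \<open>t - i < m\<close> that by (cases "t - i") auto
    ultimately show ?thesis
      by auto
  qed
  moreover have "i \<in> {1..n - L}" "x i < q" "x (i + 1) < q"
    using im seqs_less[OF x] by auto
  ultimately show "x \<in> (\<Union>(i, a, b) \<in> {1..n - L} \<times> {..<q} \<times> {..<q}.
     {x \<in> seqs q n. \<forall>t\<in>{i..i + L}. x t = (if even (t - i) then a else b)})"
    using x by blast
qed

lemma card_seqs_minus_ALL_set_le: "card (seqs q n - ALL_set q n L) * q ^ L \<le> n * q ^ (n + 1)"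
proof -
  let ?I = "{1..n - L} \<times> {..<q} \<times> {..<q}"
  let ?F = "\<lambda>(i, a, b). {x \<in> seqs q n. \<forall>t\<in>{i..i + L}. x t = (if even (t - i) then a else b)}"
  have "card (seqs q n - ALL_set q n L) \<le> card (\<Union> (?F ` ?I))"
    using seqs_minus_ALL_set_subset by (intro card_mono) (auto intro: finite_subset[OF _ finite_seqs])
  also have "\<dots> \<le> (\<Sum>k\<in>?I. card (?F k))"
    by (rule card_UN_le) simp
  also have "\<dots> \<le> (\<Sum>k\<in>?I. q ^ (n - (L + 1)))"
  proof (rule sum_mono)
    fix k assume "k \<in> ?I"
    then obtain i a b where "k = (i, a, b)" "1 \<le> i" "i + L \<le> n" by auto
    then show "card (?F k) \<le> q ^ (n - (L + 1))"
      using card_seqs_agreeing_le[of "{i..i + L}" n q] by simp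
  qed
  also have "\<dots> = (n - L) * q * q * q ^ (n - (L + 1))"
    by (simp add: card_cartesian_product)
  finally have "card (seqs q n - ALL_set q n L) * q ^ L \<le> (n - L) * q * q * q ^ (n - (L + 1)) * q ^ L"
    by (rule mult_right_mono) simp
  also have "\<dots> \<le> n * q ^ (n + 1)"
  proof (cases "L < n")
    case True
    then have "n + 1 = 2 + (n - (L + 1)) + L"
      by simp
    then have pow: "q ^ (n + 1) = q ^ 2 * q ^ (n - (L + 1)) * q ^ L"
      by (simp only: power_add)
    have "(n - L) * q * q * q ^ (n - (L + 1)) * q ^ L = (n - L) * q ^ (n + 1)"
      by (simp only: pow power2_eq_square mult.assoc)
    also have "\<dots> \<le> n * q ^ (n + 1)"
      by (rule mult_le_mono1) simp
    finally show ?thesis .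
  qed simp
  finally show ?thesis .
qed

lemma exists_large_class:
  assumes "finite I" "I \<noteq> {}" "A \<subseteq> (\<Union>i\<in>I. C i)" "\<And>i. i \<in> I \<Longrightarrow> finite (C i)"
  obtains i where "i \<in> I" "card A \<le> card I * card (C i)"
proof -
  have "Max ((\<lambda>i. card (C i)) ` I) \<in> (\<lambda>i. card (C i)) ` I"
    using assms(1,2) by (intro Max_in) auto
  then obtain i where i: "i \<in> I" "Max ((\<lambda>i. card (C i)) ` I) = card (C i)"
    by blast
  have "card A \<le> card (\<Union>i\<in>I. C i)"
    using assms by (intro card_mono) auto
  also have "\<dots> \<le> (\<Sum>j\<in>I. card (C j))"
    by (rule card_UN_le[OF assms(1)])
  also have "\<dots> \<le> (\<Sum>j\<in>I. card (C i))"
    using i assms(1) by (intro sum_mono) (metis Max_ge finite_imageI imageI)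
  finally show ?thesis
    using that i(1) by simp
qed

lemma indic_in_seqs: "0 < q \<Longrightarrow> indic q n x \<in> seqs q n"
  by (auto simp: indic_def seqs_def)

lemma exists_large_code:
  assumes "0 < q"
  obtains a0 a1 a2 where "a0 \<le> 3 * (q - 1)" "a1 \<le> pval q n - 1" "a2 \<le> pval q n - 1"
    "card (ALL_set q n (nat ((Pval q n - 1) div 2)))
       \<le> (3 * (q - 1) + 1) * pval q n ^ 2 * card (code q n a0 a1 a2)"
proof -
  define p where "p = pval q n"
  have p: "0 < p"
    unfolding p_def using pval_prime prime_gt_0_nat by blast
  let ?I = "{..3 * (q - 1)} \<times> {..p - 1} \<times> {..p - 1}"
  let ?C = "\<lambda>(a0, a1, a2). code q n a0 a1 a2"
  have cover: "ALL_set q n (nat ((Pval q n - 1) div 2)) \<subseteq> (\<Union>a\<in>?I. ?C a)"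
  proof
    fix x assume x: "x \<in> ALL_set q n (nat ((Pval q n - 1) div 2))"
    let ?z = "indic q n x"
    have "(VT 0 n ?z mod (3 * (q - 1) + 1), VT 1 n ?z mod p, VT 2 n ?z mod p) \<in> ?I"
      using p by (auto simp: less_Suc_eq_le[symmetric])
    moreover have "x \<in> ?C (VT 0 n ?z mod (3 * (q - 1) + 1), VT 1 n ?z mod p, VT 2 n ?z mod p)"
      using x indic_in_seqs[OF assms] unfolding code_def Cq4P_def p_def by simp
    ultimately show "x \<in> (\<Union>a\<in>?I. ?C a)"
      by blast
  qed
  have I: "finite ?I" "?I \<noteq> {}"
    by auto
  have "finite (?C a)" if "a \<in> ?I" for a
    by (rule finite_subset[OF _ finite_seqs]) (auto simp: code_def ALL_set_def split: prod.splits)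
  then obtain a where a: "a \<in> ?I"
    and large: "card (ALL_set q n (nat ((Pval q n - 1) div 2))) \<le> card ?I * card (?C a)"
    using exists_large_class[OF I cover] by blast
  have card_I: "card ?I = (3 * (q - 1) + 1) * p ^ 2"
    using p by (simp add: card_cartesian_product power2_eq_square)
  obtain a0 a1 a2 where a_eq: "a = (a0, a1, a2)"
    by (cases a)
  show ?thesis
  proof (rule that[of a0 a1 a2])
    show "a0 \<le> 3 * (q - 1)" "a1 \<le> pval q n - 1" "a2 \<le> pval q n - 1"
      using a unfolding a_eq p_def by auto
    show "card (ALL_set q n (nat ((Pval q n - 1) div 2)))
        \<le> (3 * (q - 1) + 1) * pval q n ^ 2 * card (code q n a0 a1 a2)"
      using large unfolding card_I a_eq by (simp add: p_def)
  qed
qed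

section \<open>Redundancy\<close>

lemma alternation_bound_eq:
  "nat ((Pval q n - 1) div 2) = nat \<lceil>log (real q) (real n) + log (real q) (log (real q) (real n))\<rceil>"
  unfolding Pval_def by simp

lemma log_tendsto_at_top: "1 < b \<Longrightarrow> filterlim (\<lambda>n::nat. log b (real n)) at_top sequentially"
  unfolding log_def by real_asymp

lemma pval_le_eventually:
  assumes q: "2 \<le> q"
  shows "eventually (\<lambda>n. real (pval q n) \<le> 4 * (log q n + log q (log q n) + 1)) sequentially"
proof -
  obtain M :: nat where M: "\<And>m. M \<le> m \<Longrightarrow> \<exists>p. prime p \<and> m < p \<and> p \<le> 2 * m"
    using bertrand_eventually unfolding eventually_sequentially by blast
  have "eventually (\<lambda>n. real M + real q + 1 \<le> log q n) sequentially"
    using log_tendsto_at_top[of "real q"] q by (simp add: filterlim_at_top)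
  then show ?thesis
  proof eventually_elim
    case (elim n)
    define l where "l = log q n"
    define L where "L = nat \<lceil>l + log q l\<rceil>"
    have l: "real M + real q + 1 \<le> l" and "0 \<le> log q l"
      using elim q unfolding l_def by auto
    then have L: "l + log q l \<le> real L" "real L \<le> l + log q l + 1" "int L = \<lceil>l + log q l\<rceil>"
      unfolding L_def by linarith+
    have "real M \<le> real (2 * L)" and "real q \<le> real L"
      using l L(1) \<open>0 \<le> log q l\<close> by (simp; linarith)+
    then have "M \<le> 2 * L" and "q \<le> L"
      by (simp_all only: of_nat_le_iff)
    then obtain r where r: "prime r" "2 * L < r" "r \<le> 2 * (2 * L)"
      using M by blast
    have "Pval q n = 2 * int L + 1"
      unfolding Pval_def L(3) l_def ..
    then have "Pval q n \<le> int r"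
      using r(2) by linarith
    moreover have "q \<le> r"
      using r(2) \<open>q \<le> L\<close> by linarith
    ultimately have "pval q n \<le> r"
      unfolding pval_def using r(1) by (intro Least_le) simp
    then have "pval q n \<le> 4 * L"
      using r(3) by linarith
    then have "real (pval q n) \<le> 4 * real L"
      using of_nat_mono[of "pval q n" "4 * L"] by simp
    also have "\<dots> \<le> 4 * (l + log q l + 1)"
      using L(2) by simp
    finally show ?case
      unfolding l_def .
  qed
qed

lemma card_ALL_set_ge:
  assumes q: "2 \<le> q" and n: "1 \<le> n" and l: "1 \<le> log q n"
  shows "real q ^ n * (1 - q / log q n) \<le> card (ALL_set q n (nat ((Pval q n - 1) div 2)))"
proof -
  define Q l where "Q = real q" and "l = log q n"
  define L where "L = nat ((Pval q n - 1) div 2)"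
  have Q: "1 < Q" using q unfolding Q_def by simp
  have "l + log Q l \<le> real L"
    using l Q unfolding L_def alternation_bound_eq l_def Q_def by linarith
  then have "Q powr (l + log Q l) \<le> Q ^ L"
    using Q by (simp add: powr_realpow[symmetric])
  moreover have "Q powr (l + log Q l) = real n * l"
    using Q n l unfolding l_def Q_def by (simp add: powr_add)
  ultimately have nl: "real n * l \<le> Q ^ L" by simp
  have "real (card (seqs q n - ALL_set q n L)) * Q ^ L \<le> real n * Q ^ (n + 1)"
    using card_seqs_minus_ALL_set_le[of q n L] unfolding Q_def by (simp flip: of_nat_mult of_nat_power)
  then have "real (card (seqs q n - ALL_set q n L)) * (real n * l) \<le> real n * (Q ^ n * Q)"
    using nl by (smt (verit) mult_left_mono of_nat_0_le_iff power_Suc2 Suc_eq_plus1)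
  then have bad: "real (card (seqs q n - ALL_set q n L)) * l \<le> Q ^ n * Q"
    using n by (simp add: mult.left_commute)
  have ALL_sub: "ALL_set q n L \<subseteq> seqs q n"
    by (auto simp: ALL_set_def)
  have "card (seqs q n - ALL_set q n L) = card (seqs q n) - card (ALL_set q n L)"
    by (rule card_Diff_subset[OF finite_subset[OF ALL_sub finite_seqs] ALL_sub])
  moreover have "card (ALL_set q n L) \<le> card (seqs q n)"
    by (rule card_mono[OF finite_seqs ALL_sub])
  ultimately have "real (card (ALL_set q n L)) = Q ^ n - card (seqs q n - ALL_set q n L)"
    using card_seqs[of q n] q unfolding Q_def by (simp add: of_nat_diff)
  moreover have "Q ^ n * (Q / l) \<ge> card (seqs q n - ALL_set q n L)"
    using bad l unfolding l_def by (simp add: field_simps)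
  ultimately show ?thesis
    unfolding Q_def l_def L_def by (simp add: right_diff_distrib)
qed

(* The first term pays for the sequences violating the ALL constraint, the second for
   p <= 4 (l + log_b l + 1). *)
definition redundancy_excess :: "real \<Rightarrow> real \<Rightarrow> real" where
  "redundancy_excess b l = - log b (1 - b / l) + 2 * log b (1 + (log b l + 1) / l)"

lemma redundancy_excess_tendsto_0: "1 < b \<Longrightarrow> (redundancy_excess b \<longlongrightarrow> 0) at_top"
  unfolding redundancy_excess_def log_def by real_asymp

lemma redundancy_le_of_card_ge:
  assumes "1 < real q" "0 < K" "K \<le> real (card C)"
  shows "redundancy q n C \<le> real n - log q K"
  using assms unfolding redundancy_def by simp

lemma log_quotient_eq:
  fixes b r D p :: real
  assumes "1 < b" "0 < r" "0 < D" "0 < p"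
  shows "real n - log b (b ^ n * r / (D * p\<^sup>2)) = log b D + 2 * log b p - log b r"
proof -
  have "log b (b ^ n * r / (D * p\<^sup>2)) = log b (b ^ n) + log b r - (log b D + log b (p\<^sup>2))"
    using assms by (simp add: log_divide log_mult)
  moreover have "log b (b ^ n) = real n" "log b (p\<^sup>2) = 2 * log b p"
    using assms by (simp_all add: log_nat_power)
  ultimately show ?thesis
    by simp
qed

lemma log_four_mul_eq:
  fixes b l :: real
  assumes "1 < b" "1 < l"
  shows "log b (4 * (l + log b l + 1)) = log b 4 + log b l + log b (1 + (log b l + 1) / l)"
proof -
  have "0 < log b l"
    using assms by simp
  then have pos: "0 < 1 + (log b l + 1) / l"
    using assms by (intro add_pos_pos divide_pos_pos) auto
  have "log b (4 * (l + log b l + 1)) = log b (4 * l * (1 + (log b l + 1) / l))"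
    using assms by (intro arg_cong[where f = "log b"]) (simp add: field_simps)
  also have "\<dots> = log b 4 + log b l + log b (1 + (log b l + 1) / l)"
    using assms pos by (simp add: log_mult)
  finally show ?thesis .
qed

lemma redundancy_le_eventually:
  assumes q: "2 \<le> q"
  shows "eventually (\<lambda>n. \<exists>a0 a1 a2. a0 \<le> 3 * (q - 1) \<and> a1 \<le> pval q n - 1 \<and> a2 \<le> pval q n - 1 \<and>
      redundancy q n (code q n a0 a1 a2)
        \<le> 2 * log q (log q n) + log q (3 * (q - 1) + 1) + 2 * log q 4
          + redundancy_excess q (log q n)) sequentially"
proof -
  have "eventually (\<lambda>n. 2 * real q < log q n) sequentially"
    using log_tendsto_at_top[of "real q"] q by (simp add: filterlim_at_top_dense)
  with pval_le_eventually[OF q] eventually_ge_at_top[of "1::nat"] show ?thesis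
  proof eventually_elim
    case (elim n)
    define Q l D where "Q = real q" and "l = log q n" and "D = real (3 * (q - 1) + 1)"
    define p where "p = real (pval q n)"
    have Q: "1 < Q" and l: "2 * Q < l" and D: "0 < D" and p: "0 < p"
      using q elim(3) pval_prime[of q n] prime_gt_0_nat unfolding Q_def l_def D_def p_def by auto
    then have ratio: "0 < 1 - Q / l" and l1: "1 \<le> log q n"
      unfolding l_def Q_def by (simp_all add: field_simps)
    obtain a0 a1 a2 where a: "a0 \<le> 3 * (q - 1)" "a1 \<le> pval q n - 1" "a2 \<le> pval q n - 1"
      and large: "card (ALL_set q n (nat ((Pval q n - 1) div 2)))
         \<le> (3 * (q - 1) + 1) * pval q n ^ 2 * card (code q n a0 a1 a2)"
      using exists_large_code[of q n] q by auto
    have "real (card (ALL_set q n (nat ((Pval q n - 1) div 2))))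
        \<le> real ((3 * (q - 1) + 1) * pval q n ^ 2 * card (code q n a0 a1 a2))"
      using large by (simp only: of_nat_le_iff)
    then have "real (card (ALL_set q n (nat ((Pval q n - 1) div 2)))) \<le> D * p\<^sup>2 * card (code q n a0 a1 a2)"
      by (simp only: D_def p_def of_nat_mult of_nat_power)
    then have "Q ^ n * (1 - Q / l) \<le> D * p\<^sup>2 * card (code q n a0 a1 a2)"
      using card_ALL_set_ge[OF q elim(2) l1] unfolding Q_def l_def by linarith
    then have "Q ^ n * (1 - Q / l) / (D * p\<^sup>2) \<le> card (code q n a0 a1 a2)"
      using D p by (simp add: pos_divide_le_eq ac_simps)
    moreover have "0 < Q ^ n * (1 - Q / l) / (D * p\<^sup>2)"
      using Q ratio D p by (intro divide_pos_pos mult_pos_pos) simp_all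
    ultimately have "redundancy q n (code q n a0 a1 a2) \<le> real n - log Q (Q ^ n * (1 - Q / l) / (D * p\<^sup>2))"
      using Q unfolding Q_def by (intro redundancy_le_of_card_ge)
    also have "\<dots> = log Q D + 2 * log Q p - log Q (1 - Q / l)"
      using log_quotient_eq[OF Q ratio D p] .
    also have "\<dots> \<le> log Q D + 2 * log Q (4 * (l + log Q l + 1)) - log Q (1 - Q / l)"
      using elim(1) Q p unfolding Q_def l_def p_def by simp
    also have "log Q (4 * (l + log Q l + 1)) = log Q 4 + log Q l + log Q (1 + (log Q l + 1) / l)"
      using Q l by (intro log_four_mul_eq) auto
    finally show ?case
      using a unfolding redundancy_excess_def Q_def l_def D_def by (intro exI conjI) (auto simp: algebra_simps)
  qed
qed

theorem theorem9:
  fixes q :: nat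
  assumes "q \<ge> 2"
  shows "(\<forall>n a0 a1 a2. 1 \<le> n \<and> a0 \<le> 3 * (q - 1) \<and> a1 \<le> pval q n - 1 \<and> a2 \<le> pval q n - 1
            \<longrightarrow> is_2read_code q n 4 (code q n a0 a1 a2))
       \<and> (\<exists>\<epsilon> :: nat \<Rightarrow> real. (\<epsilon> \<longlonglongrightarrow> 0) \<and>
            (\<forall>n\<ge>1. \<exists>a0 a1 a2. a0 \<le> 3 * (q - 1) \<and> a1 \<le> pval q n - 1 \<and> a2 \<le> pval q n - 1 \<and>
               redundancy q n (code q n a0 a1 a2)
                 \<le> 2 * log (real q) (log (real q) (real n)) + log (real q) (real (3 * (q - 1) + 1))
                   + 2 * log (real q) 4 + \<epsilon> n))"
proof (intro conjI)
  show "\<forall>n a0 a1 a2. 1 \<le> n \<and> a0 \<le> 3 * (q - 1) \<and> a1 \<le> pval q n - 1 \<and> a2 \<le> pval q n - 1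
      \<longrightarrow> is_2read_code q n 4 (code q n a0 a1 a2)"
    by (simp add: code_is_2read_code)
  define bound where "bound n = 2 * log q (log q n) + log q (3 * (q - 1) + 1) + 2 * log q 4" for n :: nat
  obtain N where N: "\<And>n. N \<le> n \<Longrightarrow> \<exists>a0 a1 a2. a0 \<le> 3 * (q - 1) \<and> a1 \<le> pval q n - 1 \<and>
      a2 \<le> pval q n - 1 \<and> redundancy q n (code q n a0 a1 a2) \<le> bound n + redundancy_excess q (log q n)"
    using redundancy_le_eventually[OF assms] unfolding eventually_sequentially bound_def by blast
  define \<epsilon> where "\<epsilon> n = (if N \<le> n then redundancy_excess q (log q n)
      else redundancy q n (code q n 0 0 0) - bound n)" for n
  have "(\<lambda>n. redundancy_excess q (log q n)) \<longlonglongrightarrow> 0"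
    using assms by (intro filterlim_compose[OF redundancy_excess_tendsto_0 log_tendsto_at_top]) auto
  then have "\<epsilon> \<longlonglongrightarrow> 0"
    by (rule Lim_transform_eventually) (auto simp: \<epsilon>_def eventually_sequentially)
  moreover have "\<exists>a0 a1 a2. a0 \<le> 3 * (q - 1) \<and> a1 \<le> pval q n - 1 \<and> a2 \<le> pval q n - 1 \<and>
      redundancy q n (code q n a0 a1 a2) \<le> bound n + \<epsilon> n" for n
  proof (cases "N \<le> n")
    case True
    then show ?thesis
      using N[of n] by (simp add: \<epsilon>_def)
  next
    case False
    then show ?thesis
      by (intro exI[of _ 0]) (simp add: \<epsilon>_def)
  qed
  ultimately show "\<exists>\<epsilon> :: nat \<Rightarrow> real. (\<epsilon> \<longlonglongrightarrow> 0) \<and>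
      (\<forall>n\<ge>1. \<exists>a0 a1 a2. a0 \<le> 3 * (q - 1) \<and> a1 \<le> pval q n - 1 \<and> a2 \<le> pval q n - 1 \<and>
         redundancy q n (code q n a0 a1 a2)
           \<le> 2 * log (real q) (log (real q) (real n)) + log (real q) (real (3 * (q - 1) + 1))
             + 2 * log (real q) 4 + \<epsilon> n)"
    unfolding bound_def by blast
qed

end
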